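(* Let $\mathscr G=(V,\mathfrak E)$ be a subgraph of $(\mathbb Z^d,\mathfrak E_d)$, $d\ge2$, with positive weights $(w_e)_{e\in\mathfrak E}$, and let $\mathscr C=(V_{\mathscr C},\mathfrak E_{\mathscr C})$ be a subgraph of $\mathscr G$. Let $\nu,L\in(0,\infty)$ and $B\subseteq V$ satisfy: (i) there is $\mu>0$ such that $\mathcal E^{\boldsymbol w}_{\mathscr C}(f)\ge\mu\sum_{x\in V_{\mathscr C}}f(x)^2$ for all $f:V\to\mathbb R$ with $\mathrm{supp}\,f\subseteq B$; (ii) there is an injective map $\varphi:B\setminus V_{\mathscr C}\to V_{\mathscr C}$ such that for every $x\in B\setminus V_{\mathscr C}$ there is a self-avoiding directed path $l(x,\varphi(x))$ in $\mathscr G$ from $x$ to $\varphi(x)$ all of whose edges $e$ satisfy $w_e>\nu$ and whose length satisfies $|l(x,\varphi(x))|\le L$. Then for all $f:V\to\mathbb R$ with $\mathrm{supp}\,f\subseteq B$, $$\mathcal E^{\boldsymbol w}_{\mathscr G}(f)\ge\big((2L)^{d+1}\nu^{-1}+3\mu^{-1}\big)^{-1}\sum_{x\in V}f(x)^2.$$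
   Context: For an undirected graph $\mathscr G=(V,\mathfrak E)$ with weights $\boldsymbol w=(w_e)_{e\in\mathfrak E}$ and $f:V\to\mathbb R$, the Dirichlet energy on $\mathscr G$ is $\mathcal E^{\boldsymbol w}_{\mathscr G}(f)=\frac12\sum_{x\in V}\sum_{y\in V,\{x,y\}\in\mathfrak E}w_{xy}(f(x)-f(y))^2$. $(\mathbb Z^d,\mathfrak E_d)$ is the nearest-neighbour lattice. *)

theory Defs
  imports "HOL-Analysis.Analysis"
begin

text \<open>Vertices of Z^d are vectors int ^ 'd, with d = CARD('d).
  Undirected edges are two-element sets of vertices.\<close>

definition nn_adj :: "int ^ 'd \<Rightarrow> int ^ 'd \<Rightarrow> bool" where
  "nn_adj x y \<longleftrightarrow> (\<Sum>i\<in>UNIV. \<bar>x $ i - y $ i\<bar>) = 1"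

definition lattice_subgraph :: "(int ^ 'd) set \<Rightarrow> (int ^ 'd) set set \<Rightarrow> bool" where
  "lattice_subgraph V E \<longleftrightarrow>
     (\<forall>e\<in>E. \<exists>x y. e = {x, y} \<and> x \<in> V \<and> y \<in> V \<and> nn_adj x y)"

definition subgraph_of :: "'a set \<Rightarrow> 'a set set \<Rightarrow> 'a set \<Rightarrow> 'a set set \<Rightarrow> bool" where
  "subgraph_of VC EC V E \<longleftrightarrow> VC \<subseteq> V \<and> EC \<subseteq> E \<and>
     (\<forall>e\<in>EC. \<exists>x y. e = {x, y} \<and> x \<in> VC \<and> y \<in> VC)"

text \<open>Dirichlet energy, valued in [0,\<infinity>] (the graph may be infinite).\<close>
definition dirichlet_energy ::
  "'a set \<Rightarrow> 'a set set \<Rightarrow> ('a set \<Rightarrow> real) \<Rightarrow> ('a \<Rightarrow> real) \<Rightarrow> ennreal" where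
  "dirichlet_energy V E w f =
     (\<Sum>\<^sub>\<infinity>x\<in>V. \<Sum>\<^sub>\<infinity>y\<in>{y\<in>V. {x, y} \<in> E}.
        ennreal (w {x, y} * (f x - f y)\<^sup>2)) / 2"

definition sq_norm_on :: "'a set \<Rightarrow> ('a \<Rightarrow> real) \<Rightarrow> ennreal" where
  "sq_norm_on A f = (\<Sum>\<^sub>\<infinity>x\<in>A. ennreal ((f x)\<^sup>2))"

text \<open>A self-avoiding directed path in (V,E) from x to y, given as its vertex list;
  its length is the number of edges, length p - 1.\<close>
definition sa_path :: "'a set \<Rightarrow> 'a set set \<Rightarrow> 'a \<Rightarrow> 'a \<Rightarrow> 'a list \<Rightarrow> bool" where
  "sa_path V E x y p \<longleftrightarrow> p \<noteq> [] \<and> hd p = x \<and> last p = y \<and> distinct p \<and>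
     set p \<subseteq> V \<and> (\<forall>i. Suc i < length p \<longrightarrow> {p ! i, p ! Suc i} \<in> E)"

definition path_edges :: "'a list \<Rightarrow> 'a set set" where
  "path_edges p = {{p ! i, p ! Suc i} | i. Suc i < length p}"

end

theory Submission
  imports Defs
begin

text \<open>Split the squared norm of \<open>f\<close> into its parts on \<open>V\<^sub>C\<close> and on \<open>B - V\<^sub>C\<close>. The first is at
  most \<open>\<mu>\<^sup>-\<^sup>1\<close> times the energy by (i). For \<open>x \<in> B - V\<^sub>C\<close>, Cauchy--Schwarz along the path from \<open>x\<close>
  to \<open>\<phi> x\<close> gives \<open>f(x)\<^sup>2 \<le> 2 f(\<phi> x)\<^sup>2 + (2L/\<nu>) \<Sum>\<^sub>e w\<^sub>e (\<nabla>\<^sub>e f)\<^sup>2\<close>, the sum running over the edges of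
  the path. Summing over \<open>x\<close>, injectivity of \<open>\<phi>\<close> bounds the first terms by \<open>2 \<Sum>\<^sub>V\<^sub>C f\<^sup>2\<close>; and since
  the paths have length at most \<open>L\<close>, all paths through a given edge start in a box of side \<open>2L\<close>
  around it, so every edge is used at most \<open>(2L)\<^sup>d\<close> times.\<close>

lemma sum_le_infsum_ennreal:
  fixes g :: "'a \<Rightarrow> ennreal"
  assumes "finite F" "F \<subseteq> A"
  shows "sum g F \<le> infsum g A"
proof -
  have "infsum g F \<le> infsum g A"
    by (rule infsum_mono_neutral) (use assms in \<open>auto simp: nonneg_summable_on_complete\<close>)
  then show ?thesis using assms by simp
qed

lemma infsum_ennreal_le_if_sums_le:
  fixes g :: "'a \<Rightarrow> ennreal"
  assumes "\<And>F. finite F \<Longrightarrow> F \<subseteq> A \<Longrightarrow> sum g F \<le> c"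
  shows "infsum g A \<le> c"
  using assms by (subst nonneg_infsum_complete) (auto intro!: SUP_least)

lemma sum_Sigma_le_infsum_infsum_ennreal:
  fixes g :: "'a \<Rightarrow> 'b \<Rightarrow> ennreal"
  assumes U: "finite U" "U \<subseteq> Sigma A N"
  shows "(\<Sum>(a,b)\<in>U. g a b) \<le> (\<Sum>\<^sub>\<infinity>a\<in>A. \<Sum>\<^sub>\<infinity>b\<in>N a. g a b)"
proof -
  have U_eq: "U = Sigma (fst ` U) (\<lambda>a. {b. (a,b) \<in> U})" by force
  have fin: "finite {b. (a,b) \<in> U}" for a
    using finite_imageI[OF U(1), of snd] by (rule finite_subset[rotated]) force
  have "(\<Sum>(a,b)\<in>U. g a b) = (\<Sum>a\<in>fst ` U. \<Sum>b\<in>{b. (a,b) \<in> U}. g a b)"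
    by (subst U_eq, subst sum.Sigma) (use U fin in auto)
  also have "\<dots> \<le> (\<Sum>a\<in>fst ` U. \<Sum>\<^sub>\<infinity>b\<in>N a. g a b)"
    by (rule sum_mono, rule sum_le_infsum_ennreal) (use U fin in auto)
  also have "\<dots> \<le> (\<Sum>\<^sub>\<infinity>a\<in>A. \<Sum>\<^sub>\<infinity>b\<in>N a. g a b)"
    by (rule sum_le_infsum_ennreal) (use U in auto)
  finally show ?thesis .
qed

lemma sum_sum_le_multiplicity:
  fixes h :: "'b \<Rightarrow> real" and Q :: "'a \<Rightarrow> 'b set"
  assumes F: "finite F" and Q: "\<And>x. x \<in> F \<Longrightarrow> finite (Q x)"
    and h: "\<And>q. q \<in> (\<Union>x\<in>F. Q x) \<Longrightarrow> h q \<ge> 0"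
    and M: "\<And>q. q \<in> (\<Union>x\<in>F. Q x) \<Longrightarrow> real (card {x\<in>F. q \<in> Q x}) \<le> M"
  shows "(\<Sum>x\<in>F. \<Sum>q\<in>Q x. h q) \<le> M * (\<Sum>q\<in>(\<Union>x\<in>F. Q x). h q)"
proof -
  define U where "U = (\<Union>x\<in>F. Q x)"
  have U: "finite U" unfolding U_def using F Q by blast
  have "(\<Sum>x\<in>F. \<Sum>q\<in>Q x. h q) = (\<Sum>x\<in>F. \<Sum>q\<in>U. if q \<in> Q x then h q else 0)"
    by (rule sum.cong[OF refl], subst sum.If_cases[OF U])
       (auto simp: U_def intro!: sum.cong)
  also have "\<dots> = (\<Sum>q\<in>U. h q * real (card {x\<in>F. q \<in> Q x}))"
    by (subst sum.swap) (simp add: sum.If_cases[OF F] Int_def mult.commute)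
  also have "\<dots> \<le> (\<Sum>q\<in>U. h q * M)"
    by (rule sum_mono, rule mult_left_mono) (use h M in \<open>auto simp: U_def\<close>)
  also have "\<dots> = M * (\<Sum>q\<in>U. h q)"
    by (simp add: sum_distrib_left mult.commute)
  finally show ?thesis by (simp add: U_def)
qed

definition int_box :: "int ^ 'd \<Rightarrow> int \<Rightarrow> (int ^ 'd) set" where
  "int_box c r = {y. \<forall>k. y $ k \<in> {c $ k ..< c $ k + r}}"

lemma int_box_eq_image_PiE:
  "int_box c r = vec_lambda ` (PiE UNIV (\<lambda>k. {c $ k ..< c $ k + r}))"
proof (intro equalityI subsetI)
  fix y assume "y \<in> int_box c r"
  then have "vec_nth y \<in> PiE UNIV (\<lambda>k. {c $ k ..< c $ k + r})"
    by (auto simp: int_box_def)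
  then show "y \<in> vec_lambda ` (PiE UNIV (\<lambda>k. {c $ k ..< c $ k + r}))"
    by (metis image_eqI vec_nth_inverse)
qed (auto simp: int_box_def)

lemma finite_int_box: "finite (int_box c r)"
  by (simp add: int_box_eq_image_PiE finite_PiE)

lemma card_int_box:
  fixes c :: "int ^ 'd"
  shows "card (int_box c r) = nat r ^ CARD('d)"
proof -
  have "inj_on vec_lambda (PiE UNIV (\<lambda>k. {c $ k ..< c $ k + r}))"
    by (rule inj_onI) (metis vec_lambda_inverse UNIV_I)
  then show ?thesis
    by (simp add: int_box_eq_image_PiE card_image card_PiE)
qed

lemma real_card_int_box_le:
  fixes c :: "int ^ 'd"
  assumes "L \<ge> 0"
  shows "real (card (int_box c (2 * \<lfloor>L\<rfloor>))) \<le> (2 * L) ^ CARD('d)"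
proof -
  have "real (card (int_box c (2 * \<lfloor>L\<rfloor>))) = real_of_int (2 * \<lfloor>L\<rfloor>) ^ CARD('d)"
    using assms by (simp add: card_int_box)
  also have "\<dots> \<le> (2 * L) ^ CARD('d)"
    by (rule power_mono) (use assms in auto)
  finally show ?thesis .
qed

lemma lattice_edge_coord_le:
  assumes "lattice_subgraph V E" "{a, b} \<in> E"
  shows "\<bar>a $ k - b $ k\<bar> \<le> 1"
proof -
  obtain u v where uv: "{a, b} = {u, v}" "nn_adj u v"
    using assms unfolding lattice_subgraph_def by blast
  have "\<bar>u $ k - v $ k\<bar> \<le> (\<Sum>i\<in>UNIV. \<bar>u $ i - v $ i\<bar>)"
    by (rule member_le_sum) auto
  with uv show ?thesis
    by (auto simp: nn_adj_def doubleton_eq_iff abs_minus_commute)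
qed

lemma sa_path_coord_dist:
  assumes G: "lattice_subgraph V E" and p: "sa_path V E x y p" and i: "i < length p"
  shows "\<bar>x $ k - (p ! i) $ k\<bar> \<le> int i"
  using i
proof (induction i)
  case 0
  have "p ! 0 = x" using p by (metis sa_path_def hd_conv_nth)
  then show ?case by simp
next
  case (Suc i)
  then have "{p ! i, p ! Suc i} \<in> E" using p unfolding sa_path_def by auto
  then have "\<bar>(p ! i) $ k - (p ! Suc i) $ k\<bar> \<le> 1" by (rule lattice_edge_coord_le[OF G])
  with Suc show ?case by simp
qed

definition edge_energy :: "('a set \<Rightarrow> real) \<Rightarrow> ('a \<Rightarrow> real) \<Rightarrow> 'a \<times> 'a \<Rightarrow> real" where
  "edge_energy w f = (\<lambda>(a, b). w {a, b} * (f a - f b)\<^sup>2)"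

lemma edge_energy_Pair [simp]: "edge_energy w f (a, b) = w {a, b} * (f a - f b)\<^sup>2"
  by (simp add: edge_energy_def)

lemma edge_energy_swap: "edge_energy w f (b, a) = edge_energy w f (a, b)"
  by (simp add: insert_commute power2_commute)

text \<open>The Dirichlet energy sums over ordered pairs of neighbours, so a path is recorded by
  its arcs: each of its edges traversed in both directions.\<close>

definition path_arcs :: "'a list \<Rightarrow> ('a \<times> 'a) set" where
  "path_arcs p = (\<lambda>i. (p ! i, p ! Suc i)) ` {..<length p - 1} \<union>
                 (\<lambda>i. (p ! Suc i, p ! i)) ` {..<length p - 1}"

lemma finite_path_arcs: "finite (path_arcs p)"
  by (simp add: path_arcs_def)

lemma sum_path_arcs:
  fixes h :: "'a \<times> 'a \<Rightarrow> real"
  assumes p: "distinct p" and h: "\<And>a b. h (b, a) = h (a, b)"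
  shows "(\<Sum>q\<in>path_arcs p. h q) = 2 * (\<Sum>i<length p - 1. h (p ! i, p ! Suc i))"
proof -
  define n where "n = length p - 1"
  have inj_fw: "inj_on (\<lambda>i. (p ! i, p ! Suc i)) {..<n}"
    and inj_bw: "inj_on (\<lambda>i. (p ! Suc i, p ! i)) {..<n}"
    by (auto intro!: inj_onI simp: n_def nth_eq_iff_index_eq[OF p])
  have "(\<lambda>i. (p ! i, p ! Suc i)) ` {..<n} \<inter> (\<lambda>i. (p ! Suc i, p ! i)) ` {..<n} = {}"
    by (auto simp: n_def nth_eq_iff_index_eq[OF p])
  then have "(\<Sum>q\<in>path_arcs p. h q) = (\<Sum>i<n. h (p ! i, p ! Suc i)) + (\<Sum>i<n. h (p ! Suc i, p ! i))"
    unfolding path_arcs_def n_def[symmetric]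
    by (simp add: sum.union_disjoint sum.reindex[OF inj_fw] sum.reindex[OF inj_bw])
  then show ?thesis by (simp add: h n_def)
qed

lemma path_arcs_subset_Sigma:
  assumes "sa_path V E x y p"
  shows "path_arcs p \<subseteq> Sigma V (\<lambda>a. {b \<in> V. {a, b} \<in> E})"
proof -
  have "p ! i \<in> V" "p ! Suc i \<in> V" "{p ! i, p ! Suc i} \<in> E" if "i < length p - 1" for i
    using assms that unfolding sa_path_def by (auto simp: subset_iff)
  then show ?thesis unfolding path_arcs_def by (auto simp: insert_commute)
qed

lemma edge_energy_nonneg_on_path_arcs:
  assumes w: "\<forall>e\<in>E. w e > 0" and p: "sa_path V E x y p" and q: "q \<in> path_arcs p"
  shows "edge_energy w f q \<ge> 0"
proof -
  have "q \<in> Sigma V (\<lambda>a. {b \<in> V. {a, b} \<in> E})"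
    using path_arcs_subset_Sigma[OF p] q by blast
  then show ?thesis using w by (cases q) (simp add: less_imp_le)
qed

text \<open>Cauchy--Schwarz along the path, then \<open>w > \<nu>\<close> on each of its at most \<open>L\<close> edges.\<close>

lemma sa_path_sq_le:
  fixes f :: "'a \<Rightarrow> real"
  assumes p: "sa_path V E x y p" and w: "\<forall>e\<in>path_edges p. w e > \<nu>"
    and len: "real (length p - 1) \<le> L" and \<nu>: "\<nu> > 0"
  shows "(f x)\<^sup>2 \<le> 2 * (f y)\<^sup>2 + L / \<nu> * (\<Sum>q\<in>path_arcs p. edge_energy w f q)"
proof -
  define n where "n = length p - 1"
  define d where "d i = f (p ! i) - f (p ! Suc i)" for i
  have "p ! 0 = x" "p ! n = y"
    using p by (auto simp: sa_path_def hd_conv_nth last_conv_nth n_def)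
  then have telescope: "(\<Sum>i<n. d i) = f x - f y"
    unfolding d_def using sum_lessThan_telescope'[of "\<lambda>i. f (p ! i)" n] by simp
  have d_le: "(d i)\<^sup>2 \<le> edge_energy w f (p ! i, p ! Suc i) / \<nu>" if "i < n" for i
  proof -
    have "{p ! i, p ! Suc i} \<in> path_edges p" unfolding path_edges_def using that n_def by auto
    then have "\<nu> \<le> w {p ! i, p ! Suc i}" using w by (simp add: less_imp_le)
    then have "\<nu> * (d i)\<^sup>2 \<le> w {p ! i, p ! Suc i} * (d i)\<^sup>2"
      by (rule mult_right_mono) simp
    then show ?thesis using \<nu> by (simp add: d_def field_simps)
  qed
  have "(f x)\<^sup>2 = (f y + (\<Sum>i<n. d i))\<^sup>2" using telescope by simp
  also have "\<dots> \<le> 2 * (f y)\<^sup>2 + 2 * (\<Sum>i<n. d i)\<^sup>2"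
    by (smt (verit) power2_sum zero_le_power2 power2_diff)
  also have "(\<Sum>i<n. d i)\<^sup>2 \<le> real n * (\<Sum>i<n. (d i)\<^sup>2)"
    using Cauchy_Schwarz_ineq_sum[of "\<lambda>_. 1" d "{..<n}"] by simp
  also have "\<dots> \<le> L * (\<Sum>i<n. edge_energy w f (p ! i, p ! Suc i) / \<nu>)"
    using len n_def d_le by (intro mult_mono sum_mono sum_nonneg) auto
  also have "2 * (L * (\<Sum>i<n. edge_energy w f (p ! i, p ! Suc i) / \<nu>)) =
      L / \<nu> * (2 * (\<Sum>i<n. edge_energy w f (p ! i, p ! Suc i)))"
    by (simp add: sum_divide_distrib[symmetric])
  also have "\<dots> = L / \<nu> * (\<Sum>q\<in>path_arcs p. edge_energy w f q)"
    using p sum_path_arcs[of p "edge_energy w f", OF _ edge_energy_swap]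
    by (simp add: sa_path_def n_def)
  finally show ?thesis by simp
qed

text \<open>A path of length at most \<open>L\<close> through the arc \<open>q\<close> starts in a box of side \<open>2\<lfloor>L\<rfloor>\<close>
  determined by \<open>q\<close> alone; this bounds how many of the paths can share an arc.\<close>

lemma sa_path_start_in_int_box:
  assumes G: "lattice_subgraph V E" and p: "sa_path V E x y p"
    and len: "real (length p - 1) \<le> L" and q: "q \<in> path_arcs p"
  shows "x \<in> int_box (\<chi> k. min (fst q $ k) (snd q $ k) - \<lfloor>L\<rfloor> + 1) (2 * \<lfloor>L\<rfloor>)"
proof -
  obtain i where i: "i < length p - 1"
    and q_cases: "q = (p ! i, p ! Suc i) \<or> q = (p ! Suc i, p ! i)"
    using q unfolding path_arcs_def by auto
  have "real (Suc i) \<le> L" using i len by linarith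
  then have i_le: "int i + 1 \<le> \<lfloor>L\<rfloor>" by (simp add: le_floor_iff)
  show ?thesis unfolding int_box_def
  proof (intro CollectI allI)
    fix k
    have "\<bar>x $ k - (p ! i) $ k\<bar> \<le> int i"
      using sa_path_coord_dist[OF G p] i by simp
    moreover have "\<bar>(p ! i) $ k - (p ! Suc i) $ k\<bar> \<le> 1"
      using p i unfolding sa_path_def by (auto intro: lattice_edge_coord_le[OF G])
    ultimately show "x $ k \<in> {(\<chi> k. min (fst q $ k) (snd q $ k) - \<lfloor>L\<rfloor> + 1) $ k ..<
        (\<chi> k. min (fst q $ k) (snd q $ k) - \<lfloor>L\<rfloor> + 1) $ k + 2 * \<lfloor>L\<rfloor>}"
      using q_cases i_le by auto
  qed
qed

lemma sum_sq_le_rerouted: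
  fixes f :: "int ^ 'd \<Rightarrow> real"
  assumes G: "lattice_subgraph V E" and w: "\<forall>e\<in>E. w e > 0"
    and \<nu>: "\<nu> > 0" and L: "L \<ge> 0" and F: "finite F"
    and P: "\<forall>x\<in>F. sa_path V E x (\<phi> x) (P x) \<and> (\<forall>e\<in>path_edges (P x). w e > \<nu>) \<and>
              real (length (P x) - 1) \<le> L"
  shows "(\<Sum>x\<in>F. (f x)\<^sup>2) \<le> 2 * (\<Sum>x\<in>F. (f (\<phi> x))\<^sup>2) +
           L / \<nu> * (2 * L) ^ CARD('d) * (\<Sum>q\<in>(\<Union>x\<in>F. path_arcs (P x)). edge_energy w f q)"
proof -
  have nonneg: "edge_energy w f q \<ge> 0" if "q \<in> (\<Union>x\<in>F. path_arcs (P x))" for q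
    using that P edge_energy_nonneg_on_path_arcs[OF w] by blast
  have multiplicity: "real (card {x\<in>F. q \<in> path_arcs (P x)}) \<le> (2 * L) ^ CARD('d)" for q
  proof -
    define c :: "int ^ 'd" where "c = (\<chi> k. min (fst q $ k) (snd q $ k) - \<lfloor>L\<rfloor> + 1)"
    have "{x\<in>F. q \<in> path_arcs (P x)} \<subseteq> int_box c (2 * \<lfloor>L\<rfloor>)"
      using P sa_path_start_in_int_box[OF G] unfolding c_def by blast
    then have "card {x\<in>F. q \<in> path_arcs (P x)} \<le> card (int_box c (2 * \<lfloor>L\<rfloor>))"
      by (rule card_mono[OF finite_int_box])
    then show ?thesis using real_card_int_box_le[OF L, of c] by linarith
  qed
  have "(\<Sum>x\<in>F. (f x)\<^sup>2) \<le>
      (\<Sum>x\<in>F. 2 * (f (\<phi> x))\<^sup>2 + L / \<nu> * (\<Sum>q\<in>path_arcs (P x). edge_energy w f q))"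
    using P \<nu> by (intro sum_mono sa_path_sq_le) auto
  also have "\<dots> = 2 * (\<Sum>x\<in>F. (f (\<phi> x))\<^sup>2) +
      L / \<nu> * (\<Sum>x\<in>F. \<Sum>q\<in>path_arcs (P x). edge_energy w f q)"
    by (simp add: sum.distrib sum_distrib_left)
  also have "\<dots> \<le> 2 * (\<Sum>x\<in>F. (f (\<phi> x))\<^sup>2) +
      L / \<nu> * ((2 * L) ^ CARD('d) * (\<Sum>q\<in>(\<Union>x\<in>F. path_arcs (P x)). edge_energy w f q))"
    using \<nu> L nonneg multiplicity
    by (intro add_left_mono mult_left_mono sum_sum_le_multiplicity F finite_path_arcs) auto
  finally show ?thesis by (simp add: mult.assoc)
qed

lemma sum_edge_energy_le_dirichlet_energy:
  assumes U: "finite U" "U \<subseteq> Sigma V (\<lambda>a. {b \<in> V. {a, b} \<in> E})"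
    and nonneg: "\<forall>q\<in>U. edge_energy w f q \<ge> 0"
  shows "ennreal (\<Sum>q\<in>U. edge_energy w f q) \<le> 2 * dirichlet_energy V E w f"
proof -
  have "ennreal (\<Sum>q\<in>U. edge_energy w f q) = (\<Sum>q\<in>U. ennreal (edge_energy w f q))"
    using nonneg by (simp add: sum_ennreal)
  also have "\<dots> = (\<Sum>(a, b)\<in>U. ennreal (edge_energy w f (a, b)))"
    by (simp add: case_prod_unfold del: edge_energy_Pair)
  also have "\<dots> \<le> (\<Sum>\<^sub>\<infinity>a\<in>V. \<Sum>\<^sub>\<infinity>b\<in>{b \<in> V. {a, b} \<in> E}. ennreal (edge_energy w f (a, b)))"
    by (rule sum_Sigma_le_infsum_infsum_ennreal[OF U])
  also have "\<dots> = 2 * dirichlet_energy V E w f"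
    unfolding dirichlet_energy_def
    by (simp add: ennreal_times_divide ennreal_mult_divide_eq mult.commute[of 2])
  finally show ?thesis .
qed

lemma sq_norm_on_le_rerouted:
  fixes f :: "int ^ 'd \<Rightarrow> real"
  assumes G: "lattice_subgraph V E" and w: "\<forall>e\<in>E. w e > 0"
    and \<nu>: "\<nu> > 0" and L: "L \<ge> 0"
    and \<phi>_into: "\<phi> ` A \<subseteq> VC" and \<phi>_inj: "inj_on \<phi> A"
    and paths: "\<forall>x\<in>A. \<exists>p. sa_path V E x (\<phi> x) p \<and> (\<forall>e\<in>path_edges p. w e > \<nu>) \<and>
                  real (length p - 1) \<le> L"
  shows "sq_norm_on A f \<le>
     2 * sq_norm_on VC f + ennreal ((2 * L) ^ (CARD('d) + 1) / \<nu>) * dirichlet_energy V E w f"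
proof -
  obtain P where P: "\<forall>x\<in>A. sa_path V E x (\<phi> x) (P x) \<and> (\<forall>e\<in>path_edges (P x). w e > \<nu>) \<and>
                        real (length (P x) - 1) \<le> L"
    using paths by metis
  define K where "K = L / \<nu> * (2 * L) ^ CARD('d)"
  have K_nonneg: "K \<ge> 0" using \<nu> L by (simp add: K_def)
  have "(\<Sum>x\<in>F. ennreal ((f x)\<^sup>2)) \<le> 2 * sq_norm_on VC f + ennreal K * (2 * dirichlet_energy V E w f)"
    if F: "finite F" "F \<subseteq> A" for F
  proof -
    define U where "U = (\<Union>x\<in>F. path_arcs (P x))"
    have U_finite: "finite U"
      using F by (simp add: U_def finite_path_arcs)
    have paths_F: "sa_path V E x (\<phi> x) (P x)" if "x \<in> F" for x
      using F P that by blast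
    have U_arcs: "U \<subseteq> Sigma V (\<lambda>a. {b \<in> V. {a, b} \<in> E})"
      unfolding U_def using path_arcs_subset_Sigma[OF paths_F] by blast
    have U_nonneg: "\<forall>q\<in>U. edge_energy w f q \<ge> 0"
      unfolding U_def using edge_energy_nonneg_on_path_arcs[OF w paths_F] by blast
    have "(\<Sum>x\<in>F. (f x)\<^sup>2) \<le> 2 * (\<Sum>x\<in>F. (f (\<phi> x))\<^sup>2) + K * (\<Sum>q\<in>U. edge_energy w f q)"
      unfolding K_def U_def using F P by (intro sum_sq_le_rerouted[OF G w \<nu> L F(1)]) blast
    also have "(\<Sum>x\<in>F. (f (\<phi> x))\<^sup>2) = (\<Sum>y\<in>\<phi> ` F. (f y)\<^sup>2)"
      by (simp add: sum.reindex[OF inj_on_subset[OF \<phi>_inj F(2)]])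
    finally have "ennreal (\<Sum>x\<in>F. (f x)\<^sup>2) \<le>
        ennreal (2 * (\<Sum>y\<in>\<phi> ` F. (f y)\<^sup>2) + K * (\<Sum>q\<in>U. edge_energy w f q))"
      by (rule ennreal_leI)
    also have "\<dots> = 2 * (\<Sum>y\<in>\<phi> ` F. ennreal ((f y)\<^sup>2)) +
        ennreal K * ennreal (\<Sum>q\<in>U. edge_energy w f q)"
      using K_nonneg U_nonneg
      by (simp add: ennreal_plus ennreal_mult sum_nonneg sum_ennreal)
    also have "\<dots> \<le> 2 * sq_norm_on VC f + ennreal K * (2 * dirichlet_energy V E w f)"
      unfolding sq_norm_on_def using F \<phi>_into
      by (intro add_mono mult_left_mono sum_le_infsum_ennreal
            sum_edge_energy_le_dirichlet_energy U_finite U_arcs U_nonneg) auto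
    finally show ?thesis by (simp add: sum_ennreal)
  qed
  then have "sq_norm_on A f \<le> 2 * sq_norm_on VC f + ennreal K * (2 * dirichlet_energy V E w f)"
    unfolding sq_norm_on_def[of A] by (rule infsum_ennreal_le_if_sums_le)
  also have "ennreal K * (2 * dirichlet_energy V E w f) = ennreal (2 * K) * dirichlet_energy V E w f"
    using K_nonneg by (simp add: ennreal_mult mult_ac)
  also have "2 * K = (2 * L) ^ (CARD('d) + 1) / \<nu>"
    by (simp add: K_def)
  finally show ?thesis .
qed

lemma dirichlet_energy_mono_subgraph:
  assumes "subgraph_of VC EC V E"
  shows "dirichlet_energy VC EC w f \<le> dirichlet_energy V E w f"
proof -
  have "(\<Sum>\<^sub>\<infinity>x\<in>VC. \<Sum>\<^sub>\<infinity>y\<in>{y\<in>VC. {x, y} \<in> EC}. ennreal (w {x, y} * (f x - f y)\<^sup>2))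
      \<le> (\<Sum>\<^sub>\<infinity>x\<in>V. \<Sum>\<^sub>\<infinity>y\<in>{y\<in>V. {x, y} \<in> E}. ennreal (w {x, y} * (f x - f y)\<^sup>2))"
    using assms unfolding subgraph_of_def
    by (intro infsum_mono_neutral) (auto simp: nonneg_summable_on_complete)
  then show ?thesis
    unfolding dirichlet_energy_def by (rule divide_right_mono_ennreal)
qed

lemma sq_norm_on_split:
  assumes "VC \<subseteq> V" "B \<subseteq> V" "\<forall>x. f x \<noteq> 0 \<longrightarrow> x \<in> B"
  shows "sq_norm_on V f = sq_norm_on VC f + sq_norm_on (B - VC) f"
proof -
  have "sq_norm_on V f = sq_norm_on (VC \<union> (B - VC)) f"
    unfolding sq_norm_on_def by (rule infsum_cong_neutral) (use assms in auto)
  also have "\<dots> = sq_norm_on VC f + sq_norm_on (B - VC) f"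
    unfolding sq_norm_on_def
    by (rule infsum_Un_disjoint) (auto simp: nonneg_summable_on_complete)
  finally show ?thesis .
qed

lemma ennreal_inverse_mult_le_of_bounds:
  fixes S s D :: ennreal
  assumes a: "a \<ge> 0" and \<mu>: "\<mu> > 0"
    and S: "S \<le> 3 * s + ennreal a * D" and s: "ennreal \<mu> * s \<le> D"
  shows "ennreal (inverse (a + 3 / \<mu>)) * S \<le> D"
proof -
  have "3 * s = ennreal (3 / \<mu>) * (ennreal \<mu> * s)"
    using \<mu> by (simp add: mult.assoc[symmetric] ennreal_mult[symmetric])
  also have "\<dots> \<le> ennreal (3 / \<mu>) * D"
    using s by (rule mult_left_mono) simp
  finally have "S \<le> ennreal (3 / \<mu>) * D + ennreal a * D"
    using S by (metis add_right_mono order_trans)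
  also have "\<dots> = ennreal (a + 3 / \<mu>) * D"
    using a \<mu> by (simp add: ennreal_plus distrib_right add.commute)
  finally have "ennreal (inverse (a + 3 / \<mu>)) * S \<le>
      ennreal (inverse (a + 3 / \<mu>)) * (ennreal (a + 3 / \<mu>) * D)"
    by (rule mult_left_mono) simp
  also have "\<dots> = D"
    using add_nonneg_pos[OF a, of "3 / \<mu>"] \<mu>
    by (simp add: mult.assoc[symmetric] ennreal_mult[symmetric] del: ennreal_plus)
  finally show ?thesis .
qed

theorem lemma4p1:
  fixes V VC :: "(int ^ 'd) set"
    and E EC :: "(int ^ 'd) set set"
    and w :: "(int ^ 'd) set \<Rightarrow> real"
    and B :: "(int ^ 'd) set"
    and \<nu> L \<mu> :: real
    and \<phi> :: "int ^ 'd \<Rightarrow> int ^ 'd"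
  assumes d2: "CARD('d) \<ge> 2"
    and G: "lattice_subgraph V E"
    and wpos: "\<forall>e\<in>E. w e > 0"
    and C: "subgraph_of VC EC V E"
    and \<nu>pos: "\<nu> > 0" and Lpos: "L > 0"
    and BV: "B \<subseteq> V"
    and \<mu>pos: "\<mu> > 0"
    and hyp_i: "\<And>g :: int ^ 'd \<Rightarrow> real. (\<forall>x. g x \<noteq> 0 \<longrightarrow> x \<in> B) \<Longrightarrow>
         dirichlet_energy VC EC w g \<ge> ennreal \<mu> * sq_norm_on VC g"
    and \<phi>_into: "\<phi> ` (B - VC) \<subseteq> VC"
    and \<phi>_inj: "inj_on \<phi> (B - VC)"
    and paths: "\<forall>x\<in>B - VC. \<exists>p. sa_path V E x (\<phi> x) p \<and>
         (\<forall>e\<in>path_edges p. w e > \<nu>) \<and> real (length p - 1) \<le> L"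
    and f_supp: "\<forall>x. f x \<noteq> 0 \<longrightarrow> x \<in> B"
  shows "dirichlet_energy V E w f \<ge>
     ennreal (inverse ((2 * L) ^ (CARD('d) + 1) / \<nu> + 3 / \<mu>)) * sq_norm_on V f"
proof (rule ennreal_inverse_mult_le_of_bounds)
  show "(2 * L) ^ (CARD('d) + 1) / \<nu> \<ge> 0" using Lpos \<nu>pos by simp
  show "ennreal \<mu> * sq_norm_on VC f \<le> dirichlet_energy V E w f"
    using hyp_i[OF f_supp] dirichlet_energy_mono_subgraph[OF C] by (rule order_trans)
  have "VC \<subseteq> V" using C by (simp add: subgraph_of_def)
  then have "sq_norm_on V f = sq_norm_on VC f + sq_norm_on (B - VC) f"
    using BV f_supp by (rule sq_norm_on_split)
  also have "\<dots> \<le> sq_norm_on VC f + (2 * sq_norm_on VC f +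
      ennreal ((2 * L) ^ (CARD('d) + 1) / \<nu>) * dirichlet_energy V E w f)"
    using sq_norm_on_le_rerouted[OF G wpos \<nu>pos _ \<phi>_into \<phi>_inj paths] Lpos
    by (intro add_left_mono) simp
  also have "\<dots> = (1 + 2) * sq_norm_on VC f +
      ennreal ((2 * L) ^ (CARD('d) + 1) / \<nu>) * dirichlet_energy V E w f"
    by (simp only: distrib_right mult_1 add.assoc)
  finally show "sq_norm_on V f \<le> 3 * sq_norm_on VC f +
      ennreal ((2 * L) ^ (CARD('d) + 1) / \<nu>) * dirichlet_energy V E w f"
    by simp
qed (use \<mu>pos in simp)

end
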